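(* For any $\lambda>0$ and $\alpha\in(0,1)$, $$\sum_{k=1}^{\infty}\frac{\lambda^{\alpha k-1}k^{1-\alpha}}{((k-1)!)^{\alpha}}\ge\sum_{k=0}^{\infty}\frac{\lambda^{\alpha k}}{(k!)^{\alpha}},$$ while for any $\lambda>0$ and $\alpha>1$, $$\sum_{k=1}^{\infty}\frac{\lambda^{\alpha k-1}k^{1-\alpha}}{((k-1)!)^{\alpha}}\le\sum_{k=0}^{\infty}\frac{\lambda^{\alpha k}}{(k!)^{\alpha}}.$$ *)

theory Defs
  imports "HOL-Analysis.Analysis"
begin

end

theory Submission
  imports Defs
begin

text \<open>Write \<open>R k = (lam^k / k!) powr a\<close> for the terms of the right-hand series. Since
  \<open>R (Suc k) = R k * (lam / (k + 1)) powr a\<close>, the terms of the left-hand series are the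
  weighted geometric means \<open>R k powr (1/a) * R (Suc k) powr (1 - 1/a)\<close>. For \<open>a > 1\<close>
  Young's inequality bounds each of them by \<open>R k / a + (1 - 1/a) * R (Suc k)\<close>, and summing
  gives the claim because the shifted series is the original one minus \<open>R 0\<close>. For
  \<open>a < 1\<close> the roles are exchanged: \<open>R k\<close> is the weighted geometric mean of the
  \<open>k\<close>-th left-hand term and \<open>R (Suc k)\<close> with weights \<open>a\<close> and \<open>1 - a\<close>.\<close>

lemma summable_of_ratio_tendsto_0:
  fixes f :: "nat \<Rightarrow> real"
  assumes pos: "\<And>n. f n > 0" and ratio: "(\<lambda>n. f (Suc n) / f n) \<longlonglongrightarrow> 0"
  shows "summable f"
proof -
  have "eventually (\<lambda>n. f (Suc n) / f n < 1/2) sequentially"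
    by (rule order_tendstoD(2)[OF ratio]) simp
  then obtain N where N: "\<And>n. n \<ge> N \<Longrightarrow> f (Suc n) / f n < 1/2"
    by (auto simp: eventually_sequentially)
  show ?thesis
  proof (rule summable_ratio_test[of "1/2" N])
    fix n assume "n \<ge> N"
    then show "norm (f (Suc n)) \<le> 1/2 * norm (f n)"
      using N[of n] pos[of n] pos[of "Suc n"] by (simp add: divide_less_eq)
  qed simp
qed

lemma summable_Suc_powr_mult_powr_over_fact_powr:
  fixes x a b :: real
  assumes "x > 0" "a > 0"
  shows "summable (\<lambda>k. real (Suc k) powr b * x powr (a * real k) / fact k powr a)"
proof (rule summable_of_ratio_tendsto_0)
  let ?f = "\<lambda>k. real (Suc k) powr b * x powr (a * real k) / fact k powr a"
  show "?f k > 0" for k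
    using assms by simp
  have ratio: "?f (Suc k) / ?f k
    = (real (Suc (Suc k)) / real (Suc k)) powr b * (x / real (Suc k)) powr a" for k
  proof -
    have "fact (Suc k) powr a = real (Suc k) powr a * (fact k :: real) powr a"
      by (simp add: powr_mult del: of_nat_Suc)
    moreover have "x powr (a * real (Suc k)) = x powr a * x powr (a * real k)"
      by (simp add: powr_add[symmetric] algebra_simps)
    ultimately show ?thesis
      using assms by (simp add: powr_divide field_simps del: of_nat_Suc)
  qed
  have "(\<lambda>k. real (Suc (Suc k)) / real (Suc k)) \<longlonglongrightarrow> 1"
    using LIMSEQ_Suc[OF LIMSEQ_Suc_n_over_n] by simp
  then have "(\<lambda>k. (real (Suc (Suc k)) / real (Suc k)) powr b) \<longlonglongrightarrow> 1 powr b"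
    by (rule tendsto_powr) simp_all
  moreover have "(\<lambda>k. (x / real (Suc k)) powr a) \<longlonglongrightarrow> 0"
    by (rule tendsto_zero_powrI[OF LIMSEQ_Suc[OF lim_const_over_n] tendsto_const]) (use assms in auto)
  ultimately show "(\<lambda>k. ?f (Suc k) / ?f k) \<longlonglongrightarrow> 0"
    unfolding ratio using tendsto_mult by fastforce
qed

lemma suminf_shift_geometric_mean_le:
  fixes r :: "nat \<Rightarrow> real" and p :: real
  assumes pos: "\<And>k. r k > 0" and "summable r" and "0 \<le> p" "p \<le> 1"
  shows "summable (\<lambda>k. r k powr p * r (Suc k) powr (1 - p))"
    and "(\<Sum>k. r k powr p * r (Suc k) powr (1 - p)) \<le> (\<Sum>k. r k)"
proof -
  let ?g = "\<lambda>k. r k powr p * r (Suc k) powr (1 - p)"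
  have young: "?g k \<le> p * r k + (1 - p) * r (Suc k)" for k
    by (rule Youngs_inequality_0) (use assms pos in auto)
  have shift: "summable (\<lambda>k. r (Suc k))" "(\<Sum>k. r (Suc k)) \<le> (\<Sum>k. r k)"
    using \<open>summable r\<close> suminf_split_head[OF \<open>summable r\<close>] pos[of 0]
    by (simp_all add: summable_Suc_iff)
  have bound: "summable (\<lambda>k. p * r k + (1 - p) * r (Suc k))"
    by (intro summable_add summable_mult \<open>summable r\<close> shift(1))
  show "summable ?g"
    by (rule summable_comparison_test[OF _ bound]) (use young pos in \<open>auto intro!: exI[of _ 0]\<close>)
  have "(\<Sum>k. ?g k) \<le> (\<Sum>k. p * r k + (1 - p) * r (Suc k))"
    by (rule suminf_le[OF young \<open>summable ?g\<close> bound])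
  also have "\<dots> = p * (\<Sum>k. r k) + (1 - p) * (\<Sum>k. r (Suc k))"
    using \<open>summable r\<close> shift(1) by (simp add: suminf_add[symmetric] suminf_mult)
  also have "\<dots> \<le> (\<Sum>k. r k)"
    using shift(2) mult_left_mono[OF shift(2), of "1 - p"] \<open>p \<le> 1\<close> by (simp add: algebra_simps)
  finally show "(\<Sum>k. ?g k) \<le> (\<Sum>k. r k)" .
qed

lemma suminf_le_shift_geometric_mean:
  fixes r :: "nat \<Rightarrow> real" and p :: real
  assumes pos: "\<And>k. r k > 0" and "summable r" and "p \<ge> 1"
    and summable_g: "summable (\<lambda>k. r k powr p * r (Suc k) powr (1 - p))"
  shows "(\<Sum>k. r k) \<le> (\<Sum>k. r k powr p * r (Suc k) powr (1 - p))"
proof -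
  let ?g = "\<lambda>k. r k powr p * r (Suc k) powr (1 - p)"
  have "r k = ?g k powr (1 / p) * r (Suc k) powr (1 - 1 / p)" for k
    using pos[of k] pos[of "Suc k"] \<open>p \<ge> 1\<close>
    by (simp add: powr_mult powr_powr field_simps flip: powr_add)
  then have young: "r k \<le> 1 / p * ?g k + (1 - 1 / p) * r (Suc k)" for k
    using Youngs_inequality_0[of "1 / p" "1 - 1 / p" "?g k" "r (Suc k)"]
      pos[of k] pos[of "Suc k"] \<open>p \<ge> 1\<close>
    by simp
  have shift: "summable (\<lambda>k. r (Suc k))" "(\<Sum>k. r k) = (\<Sum>k. r (Suc k)) + r 0"
    using \<open>summable r\<close> suminf_split_head[OF \<open>summable r\<close>] by (simp_all add: summable_Suc_iff)
  have "(\<Sum>k. r k) \<le> (\<Sum>k. 1 / p * ?g k + (1 - 1 / p) * r (Suc k))"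
    by (rule suminf_le[OF young \<open>summable r\<close>]) (intro summable_add summable_mult summable_g shift(1))
  also have "\<dots> = 1 / p * (\<Sum>k. ?g k) + (1 - 1 / p) * ((\<Sum>k. r k) - r 0)"
    using summable_g shift by (simp add: suminf_add[symmetric] suminf_mult suminf_divide)
  finally have "1 / p * (\<Sum>k. r k) \<le> 1 / p * (\<Sum>k. ?g k) - (1 - 1 / p) * r 0"
    by (simp add: algebra_simps)
  moreover have "(1 - 1 / p) * r 0 \<ge> 0"
    using pos[of 0] \<open>p \<ge> 1\<close> by simp
  ultimately have "(\<Sum>k. r k) / p \<le> (\<Sum>k. ?g k) / p"
    by simp
  then show ?thesis
    using \<open>p \<ge> 1\<close> by (simp add: divide_le_cancel)
qed

definition exp_term_powr :: "real \<Rightarrow> real \<Rightarrow> nat \<Rightarrow> real" where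
  "exp_term_powr a lam k = lam powr (a * real k) / fact k powr a"

lemma exp_term_powr_pos: "lam > 0 \<Longrightarrow> exp_term_powr a lam k > 0"
  by (simp add: exp_term_powr_def)

lemma summable_exp_term_powr:
  assumes "lam > 0" "a > 0"
  shows "summable (exp_term_powr a lam)"
  using summable_Suc_powr_mult_powr_over_fact_powr[OF assms, of 0]
  by (simp add: exp_term_powr_def[abs_def] del: of_nat_Suc)

lemma exp_term_powr_geometric_mean:
  assumes "lam > 0" "a > 0"
  shows "exp_term_powr a lam k powr (1 / a) * exp_term_powr a lam (Suc k) powr (1 - 1 / a)
    = lam powr (a * real (Suc k) - 1) * real (Suc k) powr (1 - a) / fact k powr a"
proof -
  have nonzero: "exp_term_powr a lam j \<noteq> 0" for j
    using assms by (simp add: exp_term_powr_def)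
  have ln_term: "ln (exp_term_powr a lam j) = a * (real j * ln lam - ln (fact j))" for j
    using assms by (simp add: exp_term_powr_def ln_div ln_powr algebra_simps)
  have "ln (fact (Suc k) :: real) = ln (real (Suc k)) + ln (fact k)"
    by (simp add: ln_mult del: of_nat_Suc)
  then have "ln (exp_term_powr a lam k powr (1 / a) * exp_term_powr a lam (Suc k) powr (1 - 1 / a))
    = ln (lam powr (a * real (Suc k) - 1) * real (Suc k) powr (1 - a) / fact k powr a)"
    using assms nonzero by (simp add: ln_term ln_mult ln_div ln_powr field_simps del: of_nat_Suc)
      (simp add: algebra_simps)
  then show ?thesis
    using assms by (subst (asm) ln_inj_iff) (simp_all add: nonzero)
qed

theorem lemma2:
  fixes lam a :: real
  assumes "lam > 0"
  shows "(0 < a \<and> a < 1 \<longrightarrow>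
           (\<Sum>k. lam powr (a * real (Suc k) - 1) * real (Suc k) powr (1 - a) / (fact k) powr a)
             \<ge> (\<Sum>k. lam powr (a * real k) / (fact k) powr a))
       \<and> (a > 1 \<longrightarrow>
           (\<Sum>k. lam powr (a * real (Suc k) - 1) * real (Suc k) powr (1 - a) / (fact k) powr a)
             \<le> (\<Sum>k. lam powr (a * real k) / (fact k) powr a))"
proof -
  let ?R = "exp_term_powr a lam"
  let ?L = "\<lambda>k. lam powr (a * real (Suc k) - 1) * real (Suc k) powr (1 - a) / fact k powr a"
  have R_eq: "(\<lambda>k. lam powr (a * real k) / fact k powr a) = ?R"
    by (simp add: exp_term_powr_def[abs_def])
  have L_eq: "?L = (\<lambda>k. ?R k powr (1 / a) * ?R (Suc k) powr (1 - 1 / a))" if "a > 0"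
    using exp_term_powr_geometric_mean[OF assms that] by simp
  have R_pos: "?R k > 0" for k
    using assms by (rule exp_term_powr_pos)
  show ?thesis
  proof (intro conjI impI)
    assume "0 < a \<and> a < 1"
    then have "0 < a" "a < 1" by simp_all
    have "lam powr (a * real (Suc k) - 1) = lam powr (a - 1) * lam powr (a * real k)" for k
      by (simp add: algebra_simps flip: powr_add)
    then have "summable ?L"
      using summable_mult[OF summable_Suc_powr_mult_powr_over_fact_powr[OF assms, of a "1 - a"],
          of "lam powr (a - 1)"] \<open>0 < a\<close>
      by (simp add: mult_ac del: of_nat_Suc)
    with \<open>0 < a\<close> \<open>a < 1\<close>
    show "(\<Sum>k. ?L k) \<ge> (\<Sum>k. lam powr (a * real k) / fact k powr a)"
      unfolding R_eq L_eq[OF \<open>0 < a\<close>]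
      by (intro suminf_le_shift_geometric_mean[OF R_pos summable_exp_term_powr[OF assms]]) simp_all
  next
    assume "a > 1"
    then have "a > 0" by simp
    with \<open>a > 1\<close> show "(\<Sum>k. ?L k) \<le> (\<Sum>k. lam powr (a * real k) / fact k powr a)"
      unfolding R_eq L_eq[OF \<open>a > 0\<close>]
      by (intro suminf_shift_geometric_mean_le(2)[OF R_pos summable_exp_term_powr[OF assms]]) simp_all
  qed
qed

end
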